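(* Let $\eta>0$ and let $\mathbf x^*=(\mathbf u^*,\mathbf v^*,\mathbf t^* )$ be an optimal solution of $$\min_{(\mathbf u,\mathbf v,\mathbf t)\in\mathcal X}\ h_\eta(\mathbf u,\mathbf v,\mathbf t):=\frac{1}{4\eta}\sum_{i,j=1}^n t_{ij}^2+\tau\langle e^{-\mathbf u/\tau},\mathbf a\rangle+\tau\langle e^{-\mathbf v/\tau},\mathbf b\rangle,$$ where $\mathcal X=\{(\mathbf u,\mathbf v,\mathbf t):\mathbf u,\mathbf v\in\mathbb{R}^n,\mathbf t\in\mathbb{R}^{n\times n},t_{ij}\ge0,\ t_{ij}\ge u_i+v_j-C_{ij}\ \forall i,j\}$. Then $\mathbf x^*\in V_D$, where $D=\|C\|_\infty+\eta(\alpha+\beta)+\tau\log\big(\frac{\alpha+\beta}{2}\big)-\tau\min\{\log a_{min},\log b_{min}\}$ and $V_D=\{(\mathbf u,\mathbf v,\mathbf t):\ \tau\log\big(\frac{2a_i}{\alpha+\beta}\big)\le u_i\le D,\ \tau\log\big(\frac{2b_j}{\alpha+\beta}\big)\le v_j\le D\ \forall i,j\in[n]\}$.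
   Context: Let $n\ge1$, $C\in\mathbb{R}^{n\times n}$ with nonnegative entries and $\|C\|_\infty=\max_{i,j}|C_{ij}|$; $\mathbf a,\mathbf b\in\mathbb{R}^n$ with strictly positive entries, $\alpha=\sum_i a_i$, $\beta=\sum_i b_i$, $a_{min}=\min_i a_i$, $b_{min}=\min_i b_i$; $\tau>0$. $e^{-\mathbf u/\tau}$ denotes the entrywise exponential. *)

theory Defs
  imports Complex_Main
begin

text \<open>Index set [n] is modelled by a finite type 'n (n = CARD('n) \<ge> 1).
  Vectors are functions 'n \<Rightarrow> real, matrices 'n \<Rightarrow> 'n \<Rightarrow> real.\<close>

definition feasX :: "('n \<Rightarrow> 'n \<Rightarrow> real) \<Rightarrow> (('n \<Rightarrow> real) \<times> ('n \<Rightarrow> real) \<times> ('n \<Rightarrow> 'n \<Rightarrow> real)) set" where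
  "feasX C = {(u, v, t). \<forall>i j. t i j \<ge> 0 \<and> t i j \<ge> u i + v j - C i j}"

definition h_eta :: "real \<Rightarrow> real \<Rightarrow> ('n::finite \<Rightarrow> real) \<Rightarrow> ('n \<Rightarrow> real)
    \<Rightarrow> ('n \<Rightarrow> real) \<Rightarrow> ('n \<Rightarrow> real) \<Rightarrow> ('n \<Rightarrow> 'n \<Rightarrow> real) \<Rightarrow> real" where
  "h_eta \<eta> \<tau> a b u v t =
     1 / (4 * \<eta>) * (\<Sum>i\<in>UNIV. \<Sum>j\<in>UNIV. (t i j)\<^sup>2)
     + \<tau> * (\<Sum>i\<in>UNIV. exp (- u i / \<tau>) * a i)
     + \<tau> * (\<Sum>j\<in>UNIV. exp (- v j / \<tau>) * b j)"

definition norm_inf_mat :: "('n::finite \<Rightarrow> 'n \<Rightarrow> real) \<Rightarrow> real" where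
  "norm_inf_mat C = Max (range (\<lambda>(i, j). \<bar>C i j\<bar>))"

definition VD :: "real \<Rightarrow> real \<Rightarrow> ('n::finite \<Rightarrow> real) \<Rightarrow> ('n \<Rightarrow> real)
    \<Rightarrow> (('n \<Rightarrow> real) \<times> ('n \<Rightarrow> real) \<times> ('n \<Rightarrow> 'n \<Rightarrow> real)) set" where
  "VD \<tau> D a b = {(u, v, t).
     (\<forall>i. \<tau> * ln (2 * a i / (sum a UNIV + sum b UNIV)) \<le> u i \<and> u i \<le> D) \<and>
     (\<forall>j. \<tau> * ln (2 * b j / (sum a UNIV + sum b UNIV)) \<le> v j \<and> v j \<le> D)}"

end

theory Submission
  imports Defs
begin

text \<open>Shifting (u, v) to (u + c, v - c) preserves feasibility and the quadratic term, so
  optimality in c forces the two entropic terms <exp(-u/\<tau>), a> and <exp(-v/\<tau>), b> to be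
  equal (AM-GM); comparing with the feasible point 0 bounds their sum by \<alpha> + \<beta>, and the
  lower bounds on u and v follow termwise. Lowering u_i and t_ij together keeps feasibility, so
  first-order optimality gives t_ij \<le> 2\<eta> exp(-u_i/\<tau>) a_i \<le> \<eta>(\<alpha> + \<beta>); then
  u_i \<le> t_ij + C_ij - v_j and the lower bound on v_j give the upper bound. The bounds on v
  follow by transposing the problem.\<close>

lemma sum_update_at:
  fixes g :: "'a \<Rightarrow> 'b::ab_group_add"
  assumes "finite A" "i \<in> A"
  shows "(\<Sum>k\<in>A. if k = i then x else g k) = sum g A + (x - g i)"
proof -
  have "(\<Sum>k\<in>A. if k = i then x else g k) = x + sum g (A - {i})"
    using assms by (simp add: sum.remove)
  moreover have "sum g A = g i + sum g (A - {i})"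
    using assms by (simp add: sum.remove)
  ultimately show ?thesis
    by (simp add: algebra_simps)
qed

lemma norm_inf_mat_ge: "\<bar>C i j\<bar> \<le> norm_inf_mat C"
  unfolding norm_inf_mat_def by (rule Max_ge) (auto intro: image_eqI[where x = "(i, j)"])

lemma norm_inf_mat_transpose: "norm_inf_mat (\<lambda>i j. C j i) = norm_inf_mat C"
proof -
  have "range (\<lambda>(i, j). \<bar>C j i\<bar>) = range (\<lambda>(i, j). \<bar>C i j\<bar>)"
    by (auto simp: image_iff)
  then show ?thesis
    by (simp add: norm_inf_mat_def)
qed

lemma feasX_transpose:
  "((v, u, \<lambda>i j. t j i) \<in> feasX (\<lambda>i j. C j i)) \<longleftrightarrow> ((u, v, t) \<in> feasX C)"
  unfolding feasX_def by (auto simp: add.commute)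

lemma h_eta_transpose: "h_eta \<eta> \<tau> b a v u (\<lambda>i j. t j i) = h_eta \<eta> \<tau> a b u v t"
  unfolding h_eta_def by (subst sum.swap) simp

lemma feasX_shift:
  "(u, v, t) \<in> feasX C \<Longrightarrow> (\<lambda>i. u i + c, \<lambda>j. v j - c, t) \<in> feasX C"
  by (auto simp: feasX_def)

lemma feasX_zero: "(\<And>i j. C i j \<ge> 0) \<Longrightarrow> (\<lambda>_. 0, \<lambda>_. 0, \<lambda>_ _. 0) \<in> feasX C"
  by (auto simp: feasX_def)

lemma feasX_decrease_entry:
  assumes feas: "(u, v, t) \<in> feasX C" and "0 \<le> \<delta>" "\<delta> \<le> t i j"
  shows "(u(i := u i - \<delta>), v, t(i := (t i)(j := t i j - \<delta>))) \<in> feasX C"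
proof -
  have "0 \<le> t k l \<and> u k + v l - C k l \<le> t k l" for k l
    using feas by (simp add: feasX_def)
  then have "0 \<le> (t(i := (t i)(j := t i j - \<delta>))) k l
      \<and> (u(i := u i - \<delta>)) k + v l - C k l \<le> (t(i := (t i)(j := t i j - \<delta>))) k l" for k l
    using assms(2,3) by (smt (verit) fun_upd_apply)
  then show ?thesis
    unfolding feasX_def by blast
qed

definition entropic_term :: "real \<Rightarrow> ('n::finite \<Rightarrow> real) \<Rightarrow> ('n \<Rightarrow> real) \<Rightarrow> real" where
  "entropic_term \<tau> c w = (\<Sum>i\<in>UNIV. exp (- w i / \<tau>) * c i)"

lemma h_eta_eq_entropic_terms:
  "h_eta \<eta> \<tau> a b u v t =
     (\<Sum>i\<in>UNIV. \<Sum>j\<in>UNIV. (t i j)\<^sup>2) / (4 * \<eta>) + \<tau> * entropic_term \<tau> a u + \<tau> * entropic_term \<tau> b v"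
  by (simp add: h_eta_def entropic_term_def)

lemma entropic_term_shift:
  assumes "\<tau> \<noteq> 0"
  shows "entropic_term \<tau> c (\<lambda>i. w i + \<tau> * s) = exp (- s) * entropic_term \<tau> c w"
proof -
  have "exp (- (w i + \<tau> * s) / \<tau>) = exp (- s) * exp (- w i / \<tau>)" for i
    using assms by (simp add: exp_add[symmetric] field_simps)
  then show ?thesis
    by (simp add: entropic_term_def sum_distrib_left mult.assoc)
qed

lemma entropic_term_fun_upd:
  "entropic_term \<tau> c (w(i := w i - \<delta>)) = entropic_term \<tau> c w + exp (- w i / \<tau>) * c i * (exp (\<delta> / \<tau>) - 1)"
proof -
  have "exp (- (w(i := w i - \<delta>)) k / \<tau>) * c k
      = (if k = i then exp (- w i / \<tau>) * c i * exp (\<delta> / \<tau>) else exp (- w k / \<tau>) * c k)" for k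
    by (simp add: exp_add[symmetric] diff_divide_distrib)
  then show ?thesis
    by (simp add: entropic_term_def sum_update_at algebra_simps)
qed

lemma sum_squares_fun_upd:
  fixes t :: "'n::finite \<Rightarrow> 'n \<Rightarrow> real"
  shows "(\<Sum>k\<in>UNIV. \<Sum>l\<in>UNIV. ((t(i := (t i)(j := x))) k l)\<^sup>2)
       = (\<Sum>k\<in>UNIV. \<Sum>l\<in>UNIV. (t k l)\<^sup>2) + (x\<^sup>2 - (t i j)\<^sup>2)"
proof -
  have "(\<Sum>l\<in>UNIV. ((t(i := (t i)(j := x))) k l)\<^sup>2)
      = (if k = i then (\<Sum>l\<in>UNIV. (t i l)\<^sup>2) + (x\<^sup>2 - (t i j)\<^sup>2) else \<Sum>l\<in>UNIV. (t k l)\<^sup>2)" for k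
  proof -
    have "((t(i := (t i)(j := x))) i l)\<^sup>2 = (if l = j then x\<^sup>2 else (t i l)\<^sup>2)" for l
      by simp
    then show ?thesis
      by (simp add: sum_update_at)
  qed
  then show ?thesis
    by (simp add: sum_update_at)
qed

lemma h_eta_decrease_entry:
  "h_eta \<eta> \<tau> a b (u(i := u i - \<delta>)) v (t(i := (t i)(j := t i j - \<delta>)))
     = h_eta \<eta> \<tau> a b u v t + ((t i j - \<delta>)\<^sup>2 - (t i j)\<^sup>2) / (4 * \<eta>)
       + \<tau> * (exp (- u i / \<tau>) * a i * (exp (\<delta> / \<tau>) - 1))"
  unfolding h_eta_eq_entropic_terms sum_squares_fun_upd entropic_term_fun_upd
  by (simp add: add_divide_distrib[symmetric] algebra_simps)

lemma eq_if_exp_shift_minimal: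
  fixes A B :: real
  assumes "A > 0" "B > 0" and shift: "\<And>s. A + B \<le> exp (- s) * A + exp s * B"
  shows "A = B"
proof -
  define p q where "p = sqrt A" and "q = sqrt B"
  have pq: "p > 0" "q > 0" "A = p\<^sup>2" "B = q\<^sup>2"
    using assms by (simp_all add: p_def q_def)
  have "exp (ln (p / q)) = p / q" "exp (- ln (p / q)) = q / p"
    using pq by (simp_all add: exp_minus)
  with shift[of "ln (p / q)"] have "p\<^sup>2 + q\<^sup>2 \<le> q / p * p\<^sup>2 + p / q * q\<^sup>2"
    using pq by simp
  also have "\<dots> = 2 * p * q"
    using pq by (simp add: power2_eq_square)
  finally have "(p - q)\<^sup>2 \<le> 0"
    by (simp add: power2_diff)
  then show ?thesis
    using pq by simp
qed

lemma ln_le_of_exp_mult_le: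
  fixes \<tau> c m w :: real
  assumes "\<tau> > 0" "c > 0" "m > 0" "exp (- w / \<tau>) * c \<le> m"
  shows "\<tau> * ln (c / m) \<le> w"
proof -
  have "c = exp (w / \<tau>) * (exp (- w / \<tau>) * c)"
    using exp_add[of "w / \<tau>" "- w / \<tau>"] by (simp add: mult.assoc[symmetric])
  also have "\<dots> \<le> exp (w / \<tau>) * m"
    using assms(4) by (rule mult_left_mono) simp
  finally have "c / m \<le> exp (w / \<tau>)"
    using assms(3) by (simp add: pos_divide_le_eq mult.commute)
  then have "ln (c / m) \<le> w / \<tau>"
    using assms by (metis divide_pos_pos ln_exp ln_le_cancel_iff exp_gt_zero)
  then show ?thesis
    using assms by (simp add: field_simps)
qed

locale h_eta_minimizer =
  fixes C :: "'n::finite \<Rightarrow> 'n \<Rightarrow> real"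
    and a b :: "'n \<Rightarrow> real"
    and \<tau> \<eta> :: real
    and us vs :: "'n \<Rightarrow> real" and ts :: "'n \<Rightarrow> 'n \<Rightarrow> real"
  assumes C_nonneg: "\<And>i j. C i j \<ge> 0"
    and a_pos: "\<And>i. a i > 0" and b_pos: "\<And>i. b i > 0"
    and tau_pos: "\<tau> > 0" and eta_pos: "\<eta> > 0"
    and feas: "(us, vs, ts) \<in> feasX C"
    and opt: "\<And>u v t. (u, v, t) \<in> feasX C \<Longrightarrow> h_eta \<eta> \<tau> a b us vs ts \<le> h_eta \<eta> \<tau> a b u v t"
begin

lemma transpose:
  "h_eta_minimizer (\<lambda>i j. C j i) b a \<tau> \<eta> vs us (\<lambda>i j. ts j i)"
proof
  show "(vs, us, \<lambda>i j. ts j i) \<in> feasX (\<lambda>i j. C j i)"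
    using feas feasX_transpose[of vs us ts C] by blast
  show "h_eta \<eta> \<tau> b a vs us (\<lambda>i j. ts j i) \<le> h_eta \<eta> \<tau> b a v u t"
    if "(v, u, t) \<in> feasX (\<lambda>i j. C j i)" for v u t
  proof -
    have "(u, v, \<lambda>i j. t j i) \<in> feasX C"
      using that feasX_transpose[of v u "\<lambda>i j. t j i" C] by blast
    then have "h_eta \<eta> \<tau> a b us vs ts \<le> h_eta \<eta> \<tau> a b u v (\<lambda>i j. t j i)"
      by (rule opt)
    moreover have "h_eta \<eta> \<tau> b a v u t = h_eta \<eta> \<tau> a b u v (\<lambda>i j. t j i)"
      by (rule h_eta_transpose)
    moreover have "h_eta \<eta> \<tau> b a vs us (\<lambda>i j. ts j i) = h_eta \<eta> \<tau> a b us vs ts"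
      by (rule h_eta_transpose)
    ultimately show ?thesis
      by linarith
  qed
qed (use C_nonneg a_pos b_pos tau_pos eta_pos in auto)

lemma entropic_terms_balanced: "entropic_term \<tau> a us = entropic_term \<tau> b vs"
proof (rule eq_if_exp_shift_minimal)
  show "entropic_term \<tau> a us > 0" "entropic_term \<tau> b vs > 0"
    unfolding entropic_term_def using a_pos b_pos by (simp_all add: sum_pos)
  fix s
  have "h_eta \<eta> \<tau> a b us vs ts \<le> h_eta \<eta> \<tau> a b (\<lambda>i. us i + \<tau> * s) (\<lambda>j. vs j + \<tau> * (- s)) ts"
    using opt feasX_shift[OF feas, of "\<tau> * s"] by simp
  moreover have "entropic_term \<tau> b (\<lambda>j. vs j + \<tau> * (- s)) = exp s * entropic_term \<tau> b vs"
    using tau_pos entropic_term_shift[of \<tau> b vs "- s"] by simp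
  ultimately have "\<tau> * (entropic_term \<tau> a us + entropic_term \<tau> b vs)
      \<le> \<tau> * (exp (- s) * entropic_term \<tau> a us + exp s * entropic_term \<tau> b vs)"
    using tau_pos unfolding h_eta_eq_entropic_terms by (simp add: entropic_term_shift algebra_simps)
  then show "entropic_term \<tau> a us + entropic_term \<tau> b vs
      \<le> exp (- s) * entropic_term \<tau> a us + exp s * entropic_term \<tau> b vs"
    using tau_pos by simp
qed

lemma entropic_term_le_half_mass: "2 * entropic_term \<tau> a us \<le> sum a UNIV + sum b UNIV"
proof -
  have "\<tau> * entropic_term \<tau> a us + \<tau> * entropic_term \<tau> b vs \<le> h_eta \<eta> \<tau> a b us vs ts"
    using eta_pos by (simp add: h_eta_eq_entropic_terms sum_nonneg)
  also have "\<dots> \<le> \<tau> * (sum a UNIV + sum b UNIV)"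
    using opt[OF feasX_zero[OF C_nonneg]] by (simp add: h_eta_def algebra_simps)
  finally show ?thesis
    using tau_pos entropic_terms_balanced by simp
qed

lemma entropic_summand_le: "exp (- us i / \<tau>) * a i \<le> entropic_term \<tau> a us"
  unfolding entropic_term_def
  by (rule member_le_sum) (use a_pos in \<open>auto intro: less_imp_le\<close>)

lemma us_lower: "\<tau> * ln (2 * a i / (sum a UNIV + sum b UNIV)) \<le> us i"
proof -
  have "sum a UNIV + sum b UNIV > 0"
    using a_pos b_pos by (simp add: sum_pos add_pos_pos)
  moreover have "exp (- us i / \<tau>) * a i \<le> (sum a UNIV + sum b UNIV) / 2"
    using entropic_summand_le[of i] entropic_term_le_half_mass by simp
  ultimately have "\<tau> * ln (a i / ((sum a UNIV + sum b UNIV) / 2)) \<le> us i"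
    by (intro ln_le_of_exp_mult_le tau_pos a_pos) simp_all
  then show ?thesis
    by (simp add: mult.commute)
qed

lemma vs_lower: "\<tau> * ln (2 * b j / (sum a UNIV + sum b UNIV)) \<le> vs j"
  using h_eta_minimizer.us_lower[OF transpose] by (simp add: add.commute)

lemma ts_le_weight: "ts i j \<le> 2 * \<eta> * (exp (- us i / \<tau>) * a i)"
proof (rule ccontr)
  define E where "E = exp (- us i / \<tau>) * a i"
  define f where "f \<delta> = ((ts i j - \<delta>)\<^sup>2 - (ts i j)\<^sup>2) / (4 * \<eta>) + \<tau> * (E * (exp (\<delta> / \<tau>) - 1))" for \<delta>
  assume "\<not> ts i j \<le> 2 * \<eta> * E"
  then have big: "ts i j > 2 * \<eta> * E" by simp
  have "E > 0" using a_pos by (simp add: E_def)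
  then have tpos: "ts i j > 0"
    using big eta_pos by (smt (verit) mult_pos_pos)
  have "(f has_real_derivative E - ts i j / (2 * \<eta>)) (at 0)"
    unfolding f_def using tau_pos eta_pos
    by (auto intro!: derivative_eq_intros simp: power2_eq_square field_simps)
  moreover have "E - ts i j / (2 * \<eta>) < 0"
    using big eta_pos by (simp add: field_simps)
  ultimately obtain d where "d > 0" and dec: "\<And>h. h > 0 \<Longrightarrow> h < d \<Longrightarrow> f h < f 0"
    using DERIV_neg_dec_right by fastforce
  define \<delta> where "\<delta> = min (d / 2) (ts i j)"
  have "0 < \<delta>" "\<delta> < d" "\<delta> \<le> ts i j"
    using \<open>d > 0\<close> tpos by (auto simp: \<delta>_def)
  have "h_eta \<eta> \<tau> a b us vs ts \<le> h_eta \<eta> \<tau> a b (us(i := us i - \<delta>)) vs (ts(i := (ts i)(j := ts i j - \<delta>)))"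
    by (rule opt, rule feasX_decrease_entry) (use feas \<open>0 < \<delta>\<close> \<open>\<delta> \<le> ts i j\<close> in auto)
  then have "0 \<le> f \<delta>"
    by (simp add: h_eta_decrease_entry f_def E_def)
  moreover have "f \<delta> < 0"
    using dec[OF \<open>0 < \<delta>\<close> \<open>\<delta> < d\<close>] by (simp add: f_def)
  ultimately show False
    by simp
qed

lemma us_upper:
  "us i \<le> norm_inf_mat C + \<eta> * (sum a UNIV + sum b UNIV)
     + \<tau> * ln ((sum a UNIV + sum b UNIV) / 2)
     - \<tau> * min (ln (Min (range a))) (ln (Min (range b)))"
proof -
  \<comment> \<open>any column index \<open>j\<close> will do\<close>
  obtain j :: 'n where True by simp
  have "sum a UNIV + sum b UNIV > 0"
    using a_pos b_pos by (simp add: sum_pos add_pos_pos)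
  have "us i + vs j - C i j \<le> ts i j"
    using feas by (simp add: feasX_def)
  have "ts i j \<le> 2 * \<eta> * (exp (- us i / \<tau>) * a i)"
    by (rule ts_le_weight)
  also have "\<dots> \<le> 2 * \<eta> * entropic_term \<tau> a us"
    using entropic_summand_le eta_pos by (intro mult_left_mono) auto
  also have "\<dots> \<le> \<eta> * (sum a UNIV + sum b UNIV)"
    using mult_left_mono[OF entropic_term_le_half_mass, of \<eta>] eta_pos by (simp add: mult.assoc)
  finally have "ts i j \<le> \<eta> * (sum a UNIV + sum b UNIV)" .
  have "C i j \<le> norm_inf_mat C"
    using norm_inf_mat_ge[of C i j] by simp
  have "Min (range b) \<le> b j" "Min (range b) > 0"
    using b_pos by (auto simp: Min_gr_iff)
  then have "\<tau> * min (ln (Min (range a))) (ln (Min (range b))) \<le> \<tau> * ln (b j)"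
    using tau_pos by (intro mult_left_mono) (auto simp: min_le_iff_disj)
  moreover have "\<tau> * ln (2 * b j / (sum a UNIV + sum b UNIV))
      = \<tau> * ln (b j) - \<tau> * ln ((sum a UNIV + sum b UNIV) / 2)"
    using b_pos[of j] \<open>sum a UNIV + sum b UNIV > 0\<close>
    by (simp add: ln_div ln_mult right_diff_distrib distrib_left mult.commute)
  ultimately show ?thesis
    using vs_lower[of j] \<open>us i + vs j - C i j \<le> ts i j\<close> \<open>ts i j \<le> \<eta> * (sum a UNIV + sum b UNIV)\<close>
      \<open>C i j \<le> norm_inf_mat C\<close>
    by linarith
qed

end

theorem corollary1:
  fixes C :: "'n::finite \<Rightarrow> 'n \<Rightarrow> real"
    and a b :: "'n \<Rightarrow> real"
    and \<tau> \<eta> :: real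
    and us vs :: "'n \<Rightarrow> real" and ts :: "'n \<Rightarrow> 'n \<Rightarrow> real"
  assumes C_nonneg: "\<And>i j. C i j \<ge> 0"
    and a_pos: "\<And>i. a i > 0" and b_pos: "\<And>i. b i > 0"
    and tau_pos: "\<tau> > 0" and eta_pos: "\<eta> > 0"
    and feas: "(us, vs, ts) \<in> feasX C"
    and opt: "\<And>u v t. (u, v, t) \<in> feasX C \<Longrightarrow> h_eta \<eta> \<tau> a b us vs ts \<le> h_eta \<eta> \<tau> a b u v t"
  shows "(us, vs, ts) \<in> VD \<tau>
           (norm_inf_mat C + \<eta> * (sum a UNIV + sum b UNIV)
            + \<tau> * ln ((sum a UNIV + sum b UNIV) / 2)
            - \<tau> * min (ln (Min (range a))) (ln (Min (range b)))) a b"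
proof -
  interpret h_eta_minimizer C a b \<tau> \<eta> us vs ts
    using assms by (rule h_eta_minimizer.intro)
  interpret transposed: h_eta_minimizer "\<lambda>i j. C j i" b a \<tau> \<eta> vs us "\<lambda>i j. ts j i"
    by (rule transpose)
  have vs_upper: "vs j \<le> norm_inf_mat C + \<eta> * (sum a UNIV + sum b UNIV)
      + \<tau> * ln ((sum a UNIV + sum b UNIV) / 2)
      - \<tau> * min (ln (Min (range a))) (ln (Min (range b)))" for j
    \<comment> \<open>instantiated: the transposition lemmas loop as simp rules by higher-order matching\<close>
    using transposed.us_upper[of j]
    by (simp only: norm_inf_mat_transpose[of C] add.commute[of "sum b UNIV" "sum a UNIV"]
        min.commute[of "ln (Min (range b))" "ln (Min (range a))"])
  show ?thesis
    unfolding VD_def using us_lower vs_lower us_upper vs_upper by blast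
qed

end
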